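(* Let $b\ge1$, $k\ge 0$. For $S\in\mathrm{SYT}^{+k}((b,b))$ define the path $\beta(S)$ of length $2b+k$ whose $j$-th step ($j\in[2b+k]$) is: an up step $U$ if $j$ is the minimum of the set in some top-row cell; a down step $D$ if $j$ is the minimum of the set in some bottom-row cell; an umber horizontal step if $j$ is a non-minimal element of a top-row cell; a denim horizontal step if $j$ is a non-minimal element of a bottom-row cell. Then $\beta$ is a bijection from $\mathrm{SYT}^{+k}((b,b))$ onto the set of paths in $\mathrm{Motz}^{\{1,2\}}(2b+k)$ having exactly $k$ horizontal steps.
   Context: $\mathrm{SYT}^{+k}(\lambda)$: for a partition $\lambda$ of $N$ and $k\ge 0$, the set of fillings of the cells of $\lambda$ by nonempty sets of positive integers forming a set partition of $[N+k]$, with $\max S(u)<\min S(v)$ whenever $u\ne v$ and $u$ is weakly northwest of $v$. A bicolored Motzkin path of length $n$ is a lattice path from $(0,0)$ to $(n,0)$ with steps $U=(1,1)$, $D=(1,-1)$ and horizontal steps $(1,0)$, each horizontal step colored either umber ($u$) or denim ($d$), never going below the $x$-axis. $\mathrm{Motz}^{\{1,2\}}(n)$ is the set of such paths satisfying both: (1) no umber step occurs at height $0$; (2) no denim step occurs before the first down step. *)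

theory Defs
  imports Main
begin

text \<open>A partition is given by its list of row lengths (weakly decreasing, positive).
  Cells are pairs (row, column), 0-indexed, row 0 on top (English convention).\<close>

definition cells :: "nat list \<Rightarrow> (nat \<times> nat) set" where
  "cells lam = {(i, j). i < length lam \<and> j < lam ! i}"

definition weakly_nw :: "nat \<times> nat \<Rightarrow> nat \<times> nat \<Rightarrow> bool" where
  "weakly_nw u v \<longleftrightarrow> fst u \<le> fst v \<and> snd u \<le> snd v"

text \<open>Fillings are total functions, required to be empty outside the diagram.\<close>

definition SYT_plus :: "nat \<Rightarrow> nat list \<Rightarrow> ((nat \<times> nat) \<Rightarrow> nat set) set" where
  "SYT_plus k lam = {S.
     (\<forall>c\<in>cells lam. S c \<noteq> {}) \<and>
     (\<forall>c. c \<notin> cells lam \<longrightarrow> S c = {}) \<and>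
     (\<forall>c\<in>cells lam. \<forall>d\<in>cells lam. c \<noteq> d \<longrightarrow> S c \<inter> S d = {}) \<and>
     (\<Union>c\<in>cells lam. S c) = {1..sum_list lam + k} \<and>
     (\<forall>u\<in>cells lam. \<forall>v\<in>cells lam. u \<noteq> v \<and> weakly_nw u v \<longrightarrow> Max (S u) < Min (S v))}"

datatype step = U | D | Hu | Hd

fun step_ht :: "step \<Rightarrow> int" where
  "step_ht U = 1" | "step_ht D = -1" | "step_ht Hu = 0" | "step_ht Hd = 0"

definition height :: "step list \<Rightarrow> int" where
  "height p = sum_list (map step_ht p)"

text \<open>Bicolored Motzkin paths of length n (Hu = umber, Hd = denim horizontal step).\<close>

definition motzkin :: "nat \<Rightarrow> step list \<Rightarrow> bool" where
  "motzkin n p \<longleftrightarrow> length p = n \<and> (\<forall>i\<le>length p. height (take i p) \<ge> 0) \<and> height p = 0"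

definition Motz12 :: "nat \<Rightarrow> step list set" where
  "Motz12 n = {p. motzkin n p \<and>
     (\<forall>i<length p. p ! i = Hu \<longrightarrow> height (take i p) \<noteq> 0) \<and>
     (\<forall>i<length p. p ! i = Hd \<longrightarrow> (\<exists>j<i. p ! j = D))}"

definition num_horiz :: "step list \<Rightarrow> nat" where
  "num_horiz p = length (filter (\<lambda>s. s = Hu \<or> s = Hd) p)"

text \<open>The map beta for shape (b,b): the j-th step (j = 1..2b+k) is list entry j-1.\<close>

definition beta_step :: "nat \<Rightarrow> ((nat \<times> nat) \<Rightarrow> nat set) \<Rightarrow> nat \<Rightarrow> step" where
  "beta_step b S j =
     (if \<exists>c<b. j = Min (S (0, c)) then U
      else if \<exists>c<b. j = Min (S (1, c)) then D
      else if \<exists>c<b. j \<in> S (0, c) then Hu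
      else Hd)"

definition beta :: "nat \<Rightarrow> nat \<Rightarrow> ((nat \<times> nat) \<Rightarrow> nat set) \<Rightarrow> step list" where
  "beta b k S = map (beta_step b S) [1..<2 * b + k + 1]"

end

theory Submission
  imports Defs
begin

(*
  The number of up steps among the first j steps of beta(S) is the number of top cells whose
  minimum is at most j, and likewise for down steps and bottom cells. Each top cell starts
  before the bottom cell below it, so the path never goes below the axis, and it stays strictly
  above the axis while a top cell is still being filled, which excludes umber steps at height 0.
  A denim step lies in a bottom cell whose minimum, a down step, comes earlier.
  Conversely, a path is decoded by putting position j into the row of its j-th step (top for
  U and umber, bottom for D and denim) and into the column given by the number of up (resp.
  down) steps among the first j steps; the two path conditions are exactly what makes this
  filling increasing down the columns.
*)

definition prefix_count :: "('a \<Rightarrow> bool) \<Rightarrow> 'a list \<Rightarrow> nat \<Rightarrow> nat" where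
  "prefix_count P xs j = length (filter P (take j xs))"

lemma prefix_count_0 [simp]: "prefix_count P xs 0 = 0"
  by (simp add: prefix_count_def)

lemma prefix_count_Suc:
  "j < length xs \<Longrightarrow> prefix_count P xs (Suc j) = prefix_count P xs j + (if P (xs ! j) then 1 else 0)"
  by (simp add: prefix_count_def take_Suc_conv_app_nth)

lemma prefix_count_mono: "i \<le> j \<Longrightarrow> prefix_count P xs i \<le> prefix_count P xs j"
  by (metis le_Suc_ex length_append filter_append le_add1 take_add prefix_count_def)

lemma prefix_count_attained:
  assumes "c < prefix_count P xs N" and "N \<le> length xs"
  shows "\<exists>j. 1 \<le> j \<and> j \<le> N \<and> P (xs ! (j - 1)) \<and> prefix_count P xs j = Suc c"
  using assms
proof (induction N)
  case (Suc N)
  show ?case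
  proof (cases "c < prefix_count P xs N")
    case True
    with Suc show ?thesis by (meson Suc_leD le_SucI)
  next
    case False
    with Suc.prems prefix_count_Suc[of N xs P] show ?thesis
      by (intro exI[of _ "Suc N"]) (auto split: if_splits)
  qed
qed simp

lemma prefix_count_map_upt:
  assumes "j \<le> n"
  shows "prefix_count P (map f [1..<n+1]) j = card {i \<in> {1..j}. P (f i)}"
proof -
  have "take j (map f [1..<n+1]) = map f [1..<j+1]"
    using assms by (simp add: take_map add.commute del: upt_Suc)
  then have "prefix_count P (map f [1..<n+1]) j = length (filter (P \<circ> f) [1..<j+1])"
    by (simp add: prefix_count_def filter_map)
  also have "\<dots> = card {i \<in> {1..j}. P (f i)}"
    by (subst distinct_card[symmetric]) (auto simp: less_Suc_eq_le simp del: upt_Suc)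
  finally show ?thesis .
qed

lemma height_take:
  "height (take j xs) = int (prefix_count (\<lambda>s. s = U) xs j) - int (prefix_count (\<lambda>s. s = D) xs j)"
proof -
  have "sum_list (map step_ht ys) = int (length (filter (\<lambda>s. s = U) ys)) - int (length (filter (\<lambda>s. s = D) ys))" for ys
  proof (induction ys)
    case (Cons s ys)
    then show ?case by (cases s) auto
  qed simp
  then show ?thesis by (simp add: height_def prefix_count_def)
qed

lemma length_eq_num_UD_horiz:
  "length xs = length (filter (\<lambda>s. s = U) xs) + length (filter (\<lambda>s. s = D) xs) + num_horiz xs"
  unfolding num_horiz_def
proof (induction xs)
  case (Cons s xs)
  then show ?case by (cases s) auto
qed simp

text \<open>Row 0 of the tableau contributes U and umber steps, row 1 D and denim steps; the minimum
  of a cell contributes the opener of its row.\<close>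

fun row_of :: "step \<Rightarrow> nat" where
  "row_of U = 0" | "row_of Hu = 0" | "row_of D = 1" | "row_of Hd = 1"

fun opener :: "nat \<Rightarrow> step" where
  "opener 0 = U" | "opener (Suc r) = D"

lemma row_of_less_2: "row_of s < 2"
  by (cases s) auto

lemma row_of_opener: "r < 2 \<Longrightarrow> row_of (opener r) = r"
  by (cases r) auto

lemma step_eqI:
  "row_of s = row_of t \<Longrightarrow> (s = opener (row_of s) \<longleftrightarrow> t = opener (row_of t)) \<Longrightarrow> s = t"
  by (cases s; cases t) auto

lemma length_beta [simp]: "length (beta b k S) = 2 * b + k"
  by (simp add: beta_def del: upt_Suc)

lemma nth_beta: "i < 2 * b + k \<Longrightarrow> beta b k S ! i = beta_step b S (Suc i)"
  by (simp add: beta_def del: upt_Suc)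

lemma cells_two_rows: "(r, c) \<in> cells [b, b] \<longleftrightarrow> r < 2 \<and> c < b"
  by (auto simp: cells_def less_2_cases_iff nth_Cons split: nat.splits)

definition beta_inv :: "nat \<Rightarrow> step list \<Rightarrow> nat \<times> nat \<Rightarrow> nat set" where
  "beta_inv b q = (\<lambda>(r, c). {j \<in> {1..length q}. c < b \<and> row_of (q ! (j - 1)) = r \<and>
      prefix_count (\<lambda>s. s = opener r) q j = Suc c})"

lemma mem_beta_inv:
  "j \<in> beta_inv b q (r, c) \<longleftrightarrow> j \<in> {1..length q} \<and> c < b \<and> row_of (q ! (j - 1)) = r \<and>
      prefix_count (\<lambda>s. s = opener r) q j = Suc c"
  by (simp add: beta_inv_def)

section \<open>From tableaux to paths\<close>

locale two_row_syt =
  fixes b k :: nat and S :: "nat \<times> nat \<Rightarrow> nat set"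
  assumes S: "S \<in> SYT_plus k [b, b]"
begin

abbreviation "n \<equiv> 2 * b + k"
abbreviation "p \<equiv> beta b k S"

lemma cell_empty: "\<not> (r < 2 \<and> c < b) \<Longrightarrow> S (r, c) = {}"
  using S by (auto simp: SYT_plus_def cells_two_rows)

lemma cell_subset: "S (r, c) \<subseteq> {1..n}"
proof (cases "r < 2 \<and> c < b")
  case True
  then have "S (r, c) \<subseteq> (\<Union>d\<in>cells [b, b]. S d)"
    by (intro UN_upper) (simp add: cells_two_rows)
  with S show ?thesis by (simp add: SYT_plus_def mult_2)
qed (simp add: cell_empty)

lemma finite_cell: "finite (S (r, c))"
  using cell_subset finite_subset by blast

lemma cell_unique:
  assumes "x \<in> S (r, c)" "x \<in> S (r', c')"
  shows "(r, c) = (r', c')"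
proof (rule ccontr)
  assume "(r, c) \<noteq> (r', c')"
  moreover have "(r, c) \<in> cells [b, b]" "(r', c') \<in> cells [b, b]"
    using assms cell_empty by (fastforce simp: cells_two_rows)+
  ultimately have "S (r, c) \<inter> S (r', c') = {}"
    using S unfolding SYT_plus_def by blast
  with assms show False by blast
qed

lemma cell_exists:
  assumes "j \<in> {1..n}"
  obtains r c where "r < 2" "c < b" "j \<in> S (r, c)"
proof -
  from S assms have "j \<in> (\<Union>d\<in>cells [b, b]. S d)"
    by (simp add: SYT_plus_def mult_2)
  then obtain r c where "(r, c) \<in> cells [b, b]" "j \<in> S (r, c)"
    by auto
  then show thesis
    using that by (auto simp: cells_two_rows)
qed

lemma cell_less:
  assumes "r \<le> r'" "c \<le> c'" "(r, c) \<noteq> (r', c')" "r' < 2" "c' < b"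
    and "x \<in> S (r, c)" "y \<in> S (r', c')"
  shows "x < y"
proof -
  have "Max (S (r, c)) < Min (S (r', c'))"
    using S assms(1-5) by (auto simp: SYT_plus_def weakly_nw_def cells_two_rows)
  moreover have "x \<le> Max (S (r, c))" "Min (S (r', c')) \<le> y"
    using assms(6,7) finite_cell by simp_all
  ultimately show ?thesis by linarith
qed

lemma Min_cell_in: "r < 2 \<Longrightarrow> c < b \<Longrightarrow> Min (S (r, c)) \<in> S (r, c)"
  using S finite_cell by (simp add: SYT_plus_def cells_two_rows)

lemma Min_cell_le: "x \<in> S (r, c) \<Longrightarrow> Min (S (r, c)) \<le> x"
  using finite_cell by simp

lemma beta_step_cell:
  assumes "r < 2" "c < b" "j \<in> S (r, c)"
  shows "row_of (beta_step b S j) = r \<and> (beta_step b S j = opener r \<longleftrightarrow> j = Min (S (r, c)))"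
proof -
  have in_cell: "j \<in> S (r', c') \<longleftrightarrow> r' = r \<and> c' = c" for r' c'
    using assms(3) cell_unique by blast
  have is_Min: "(\<exists>c'<b. j = Min (S (r', c'))) \<longleftrightarrow> r' = r \<and> j = Min (S (r, c))"
    if "r' < 2" for r'
    using in_cell Min_cell_in that assms(2) by metis
  have top: "(\<exists>c'<b. j \<in> S (0, c')) \<longleftrightarrow> r = 0"
    using in_cell assms(2) by auto
  have top_Min: "(\<exists>c'<b. j = Min (S (0, c'))) \<longleftrightarrow> r = 0 \<and> j = Min (S (r, c))"
    using is_Min[of 0] by simp
  have bottom_Min: "(\<exists>c'<b. j = Min (S (1, c'))) \<longleftrightarrow> r = 1 \<and> j = Min (S (r, c))"
    using is_Min[of 1] by auto
  show ?thesis
    unfolding beta_step_def top_Min bottom_Min top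
    using assms(1) by (cases r) auto
qed

lemma beta_step_eq_opener_iff:
  assumes "r < 2" "j \<in> {1..n}"
  shows "beta_step b S j = opener r \<longleftrightarrow> (\<exists>c<b. j = Min (S (r, c)))"
proof
  obtain r' c' where cell: "r' < 2" "c' < b" "j \<in> S (r', c')"
    using cell_exists assms(2) by blast
  assume "beta_step b S j = opener r"
  with cell assms(1) have "r' = r" "j = Min (S (r', c'))"
    using beta_step_cell row_of_opener by metis+
  with cell show "\<exists>c<b. j = Min (S (r, c))" by blast
next
  assume "\<exists>c<b. j = Min (S (r, c))"
  then obtain c where "c < b" "j = Min (S (r, c))" by blast
  with assms(1) show "beta_step b S j = opener r"
    using beta_step_cell Min_cell_in by metis
qed

lemma count_opener_beta:
  assumes "r < 2" "j \<le> n"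
  shows "prefix_count (\<lambda>s. s = opener r) p j = card {c. c < b \<and> Min (S (r, c)) \<le> j}"
proof -
  have Min_ge_1: "1 \<le> Min (S (r, c))" if "c < b" for c
    using Min_cell_in[OF assms(1) that] cell_subset by fastforce
  have "prefix_count (\<lambda>s. s = opener r) p j = card {i \<in> {1..j}. beta_step b S i = opener r}"
    unfolding beta_def using assms(2) by (rule prefix_count_map_upt)
  also have "{i \<in> {1..j}. beta_step b S i = opener r}
      = (\<lambda>c. Min (S (r, c))) ` {c. c < b \<and> Min (S (r, c)) \<le> j}"
    using assms beta_step_eq_opener_iff Min_ge_1 by auto
  also have "card \<dots> = card {c. c < b \<and> Min (S (r, c)) \<le> j}"
    by (rule card_image, rule inj_onI) (metis Min_cell_in assms(1) cell_unique mem_Collect_eq prod.inject)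
  finally show ?thesis .
qed

lemma count_opener_in_cell:
  assumes "r < 2" "c < b" "j \<in> S (r, c)"
  shows "prefix_count (\<lambda>s. s = opener r) p j = Suc c"
proof -
  have "{c'. c' < b \<and> Min (S (r, c')) \<le> j} = {..c}"
  proof (intro set_eqI iffI)
    fix c' assume "c' \<in> {c'. c' < b \<and> Min (S (r, c')) \<le> j}"
    then show "c' \<in> {..c}"
      using cell_less[of r r c c' j "Min (S (r, c'))"] assms Min_cell_in by fastforce
  next
    fix c' assume "c' \<in> {..c}"
    then show "c' \<in> {c'. c' < b \<and> Min (S (r, c')) \<le> j}"
      using cell_less[of r r c' c "Min (S (r, c'))" j] assms Min_cell_in Min_cell_le
      by (cases "c' = c") auto
  qed
  moreover have "j \<le> n"
    using assms(3) cell_subset by fastforce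
  ultimately show ?thesis
    using count_opener_beta assms(1) by simp
qed

lemma count_opener_total: "r < 2 \<Longrightarrow> prefix_count (\<lambda>s. s = opener r) p n = b"
proof -
  assume r: "r < 2"
  have "Min (S (r, c)) \<le> n" if "c < b" for c
    using Min_cell_in[OF r that] cell_subset by fastforce
  then have "{c. c < b \<and> Min (S (r, c)) \<le> n} = {..<b}"
    by auto
  with r show ?thesis
    using count_opener_beta[of r n] by simp
qed

lemma nth_beta_pred: "j \<in> {1..n} \<Longrightarrow> p ! (j - 1) = beta_step b S j"
  using nth_beta[of "j - 1" b k S] by (simp add: Suc_diff_1 less_eq_Suc_le)

lemma beta_inv_beta: "beta_inv b p = S"
proof (intro ext set_eqI, clarify)
  fix r c j
  show "j \<in> beta_inv b p (r, c) \<longleftrightarrow> j \<in> S (r, c)"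
  proof
    assume "j \<in> beta_inv b p (r, c)"
    then have range: "j \<in> {1..n}" and row: "row_of (p ! (j - 1)) = r"
        and count: "prefix_count (\<lambda>s. s = opener r) p j = Suc c"
      by (simp_all add: mem_beta_inv)
    obtain r' c' where cell: "r' < 2" "c' < b" "j \<in> S (r', c')"
      using cell_exists range by blast
    then have "r' = r"
      using beta_step_cell row nth_beta_pred[OF range] by metis
    with cell count have "c' = c"
      using count_opener_in_cell by fastforce
    with cell \<open>r' = r\<close> show "j \<in> S (r, c)" by simp
  next
    assume j: "j \<in> S (r, c)"
    then have "r < 2" "c < b"
      using cell_empty by blast+
    moreover have "j \<in> {1..n}"
      using j cell_subset by blast
    ultimately show "j \<in> beta_inv b p (r, c)"
      using j beta_step_cell count_opener_in_cell nth_beta_pred by (simp add: mem_beta_inv)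
  qed
qed

abbreviation top_cols :: "nat \<Rightarrow> nat set" where
  "top_cols j \<equiv> {c. c < b \<and> Min (S (0, c)) \<le> j}"

abbreviation bottom_cols :: "nat \<Rightarrow> nat set" where
  "bottom_cols j \<equiv> {c. c < b \<and> Min (S (1, c)) \<le> j}"

lemma height_beta: "j \<le> n \<Longrightarrow> height (take j p) = int (card (top_cols j)) - int (card (bottom_cols j))"
  using height_take count_opener_beta[of 0 j] count_opener_beta[of 1 j] by simp

lemma bottom_cols_subset: "bottom_cols j \<subseteq> top_cols j"
proof
  fix c assume "c \<in> bottom_cols j"
  then have "c < b" "Min (S (0, c)) < Min (S (1, c))"
    using cell_less[of 0 1 c c] Min_cell_in by auto
  with \<open>c \<in> bottom_cols j\<close> show "c \<in> top_cols j" by simp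
qed

lemma beta_motzkin: "motzkin n p"
proof -
  have "height (take j p) \<ge> 0" if "j \<le> n" for j
    using height_beta[OF that] card_mono[OF _ bottom_cols_subset] by simp
  moreover have "height p = 0"
    using height_take[of n p] count_opener_total[of 0] count_opener_total[of 1] by simp
  ultimately show ?thesis
    by (simp add: motzkin_def)
qed

lemma beta_umber_off_axis:
  assumes "i < n" "p ! i = Hu"
  shows "height (take i p) \<noteq> 0"
proof -
  obtain r c where cell: "r < 2" "c < b" "Suc i \<in> S (r, c)"
    using cell_exists[of "Suc i"] assms(1) by auto
  moreover have "beta_step b S (Suc i) = Hu"
    using assms nth_beta[of i b k S] by simp
  ultimately have "r = 0" "Suc i \<noteq> Min (S (0, c))"
    using beta_step_cell[of r c "Suc i"] by auto
  moreover have "Min (S (0, c)) \<le> Suc i"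
    using Min_cell_le cell \<open>r = 0\<close> by simp
  ultimately have "c \<in> top_cols i"
    using cell(2) by simp
  moreover have "Suc i < Min (S (1, c))"
    using cell_less[of 0 1 c c "Suc i" "Min (S (1, c))"] cell \<open>r = 0\<close> Min_cell_in by simp
  then have "c \<notin> bottom_cols i"
    by simp
  ultimately have "card (bottom_cols i) < card (top_cols i)"
    using bottom_cols_subset by (intro psubset_card_mono) auto
  with assms(1) show ?thesis
    using height_beta[of i] by simp
qed

lemma beta_denim_after_down:
  assumes "i < n" "p ! i = Hd"
  shows "\<exists>j<i. p ! j = D"
proof -
  obtain r c where cell: "r < 2" "c < b" "Suc i \<in> S (r, c)"
    using cell_exists[of "Suc i"] assms(1) by auto
  moreover have "beta_step b S (Suc i) = Hd"
    using assms nth_beta[of i b k S] by simp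
  ultimately have "r = 1" "Suc i \<noteq> Min (S (1, c))"
    using beta_step_cell[of r c "Suc i"] by auto
  define m where "m = Min (S (1, c))"
  have m: "m \<in> S (1, c)" "m \<in> {1..n}"
    using Min_cell_in[of 1 c] cell_subset[of 1 c] cell(2) unfolding m_def by auto
  have "m \<le> Suc i"
    using Min_cell_le cell \<open>r = 1\<close> unfolding m_def by simp
  with \<open>Suc i \<noteq> Min (S (1, c))\<close> have "m - 1 < i"
    using m(2) unfolding m_def by auto
  moreover have "beta_step b S m = D"
    using beta_step_cell[of 1 c m] m(1) cell(2) unfolding m_def by simp
  then have "p ! (m - 1) = D"
    using nth_beta_pred[OF m(2)] by simp
  ultimately show ?thesis
    by blast
qed

lemma num_horiz_beta: "num_horiz p = k"
proof -
  have "length (filter (\<lambda>s. s = U) p) = b" "length (filter (\<lambda>s. s = D) p) = b"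
    using count_opener_total[of 0] count_opener_total[of 1] by (simp_all add: prefix_count_def)
  then show ?thesis
    using length_eq_num_UD_horiz[of p] length_beta[of b k S] by linarith
qed

lemma beta_in_Motz12: "p \<in> Motz12 n"
  using beta_motzkin beta_umber_off_axis beta_denim_after_down by (simp add: Motz12_def)

end

section \<open>From paths to tableaux\<close>

locale motz12_path =
  fixes b k :: nat and q :: "step list"
  assumes q: "q \<in> Motz12 (2 * b + k)" and horiz: "num_horiz q = k"
begin

abbreviation "n \<equiv> 2 * b + k"
abbreviation "T \<equiv> beta_inv b q"

abbreviation openers :: "nat \<Rightarrow> nat \<Rightarrow> nat" where
  "openers r \<equiv> prefix_count (\<lambda>s. s = opener r) q"

lemma length_path: "length q = n"
  using q by (simp add: Motz12_def motzkin_def)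

lemma openers_step:
  assumes "j \<in> {1..n}"
  shows "openers r j = openers r (j - 1) + (if q ! (j - 1) = opener r then 1 else 0)"
proof -
  have "j - 1 < length q" "Suc (j - 1) = j"
    using assms length_path by auto
  then show ?thesis
    using prefix_count_Suc[of "j - 1" q "\<lambda>s. s = opener r"] by simp
qed

lemma openers_D_le_U: "j \<le> n \<Longrightarrow> openers 1 j \<le> openers 0 j"
proof -
  assume "j \<le> n"
  with q have "height (take j q) \<ge> 0"
    by (simp add: Motz12_def motzkin_def)
  then show ?thesis
    using height_take[of j q] by simp
qed

lemma openers_D_less_U_before_Hu: "i < n \<Longrightarrow> q ! i = Hu \<Longrightarrow> openers 1 i < openers 0 i"
proof -
  assume "i < n" "q ! i = Hu"
  with q have "height (take i q) \<noteq> 0"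
    using length_path by (simp add: Motz12_def)
  then show ?thesis
    using height_take[of i q] openers_D_le_U[of i] \<open>i < n\<close> by simp
qed

lemma openers_total: "r < 2 \<Longrightarrow> openers r n = b"
proof -
  have "openers 0 n = openers 1 n"
    using q height_take[of n q] length_path by (simp add: Motz12_def motzkin_def)
  moreover have "n = openers 0 n + openers 1 n + k"
    using length_eq_num_UD_horiz[of q] horiz length_path by (simp add: prefix_count_def)
  moreover assume "r < 2"
  ultimately show ?thesis
    by (auto simp: less_2_cases_iff)
qed

lemma openers_D_less_U_after_top_step:
  assumes "j \<in> {1..n}" "row_of (q ! (j - 1)) = 0"
  shows "openers 1 j < openers 0 j"
proof (cases "q ! (j - 1)")
  case U
  moreover have "openers 1 (j - 1) \<le> openers 0 (j - 1)"
    using assms(1) by (intro openers_D_le_U) auto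
  ultimately show ?thesis
    using assms(1) openers_step[of j 0] openers_step[of j 1] by simp
next
  case Hu
  moreover have "openers 1 (j - 1) < openers 0 (j - 1)"
    using assms(1) Hu by (intro openers_D_less_U_before_Hu) auto
  ultimately show ?thesis
    using assms(1) openers_step[of j 0] openers_step[of j 1] by simp
qed (use assms(2) in auto)

lemma openers_pos:
  assumes "j \<in> {1..n}"
  shows "0 < openers (row_of (q ! (j - 1))) j"
proof (cases "q ! (j - 1)")
  case D
  then show ?thesis
    using assms openers_step[of j 1] by simp
next
  case Hd
  moreover have "j - 1 < length q"
    using assms length_path by auto
  ultimately obtain l where l: "l < j - 1" "q ! l = D"
    using q by (auto simp: Motz12_def)
  with \<open>j - 1 < length q\<close> have "0 < openers 1 (Suc l)"
    using prefix_count_Suc[of l q] by simp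
  also have "\<dots> \<le> openers 1 j"
    using \<open>l < j - 1\<close> by (intro prefix_count_mono) simp
  finally show ?thesis
    using Hd by simp
qed (use assms openers_D_less_U_after_top_step in fastforce)+

lemma in_beta_inv_cell:
  assumes "j \<in> {1..n}"
  defines "r \<equiv> row_of (q ! (j - 1))"
  shows "j \<in> T (r, openers r j - 1)"
proof -
  have "openers r j \<le> openers r n"
    using assms(1) by (intro prefix_count_mono) simp
  then have "openers r j \<le> b"
    using openers_total[OF row_of_less_2] unfolding r_def by simp
  then show ?thesis
    using assms openers_pos[OF assms(1)] length_path by (simp add: mem_beta_inv)
qed

lemma finite_beta_inv_cell: "finite (T (r, c))"
  by (rule finite_subset[of _ "{1..length q}"]) (auto simp: mem_beta_inv)

lemma Min_beta_inv_cell: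
  assumes "x \<in> T (r, c)" "q ! (x - 1) = opener r"
  shows "Min (T (r, c)) = x"
proof (rule Min_eqI[OF finite_beta_inv_cell _ assms(1)])
  fix y assume y: "y \<in> T (r, c)"
  show "x \<le> y"
  proof (rule ccontr)
    assume "\<not> x \<le> y"
    then have "openers r y \<le> openers r (x - 1)"
      by (intro prefix_count_mono) simp
    moreover have "openers r x = Suc (openers r (x - 1))"
      using assms openers_step[of x r] length_path by (simp add: mem_beta_inv)
    ultimately show False
      using assms(1) y by (simp add: mem_beta_inv)
  qed
qed

lemma opener_in_beta_inv_cell:
  assumes "r < 2" "c < b"
  obtains x where "x \<in> T (r, c)" "q ! (x - 1) = opener r"
proof -
  obtain x where "1 \<le> x" "x \<le> n" "q ! (x - 1) = opener r" "openers r x = Suc c"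
    using prefix_count_attained[of c "\<lambda>s. s = opener r" q n] assms openers_total length_path
    by auto
  with assms show thesis
    using that row_of_opener length_path by (simp add: mem_beta_inv)
qed

lemma Min_beta_inv_cell_iff:
  assumes "r < 2" "c < b" "x \<in> T (r, c)"
  shows "x = Min (T (r, c)) \<longleftrightarrow> q ! (x - 1) = opener r"
  using opener_in_beta_inv_cell[OF assms(1,2)] Min_beta_inv_cell assms(3) by metis

lemma beta_inv_cell_less:
  assumes "x \<in> T (r, c)" "y \<in> T (r', c')" "r \<le> r'" "c \<le> c'" "(r, c) \<noteq> (r', c')"
  shows "x < y"
proof (rule ccontr)
  assume "\<not> x < y"
  then have le: "openers r' y \<le> openers r' x"
    by (intro prefix_count_mono) simp
  show False
  proof (cases "r = r'")
    case True
    with assms le show False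
      by (simp add: mem_beta_inv)
  next
    case False
    moreover have "r' < 2"
      using assms(2) row_of_less_2 by (auto simp: mem_beta_inv)
    ultimately have "r = 0" "r' = 1"
      using assms(3) by auto
    with assms le have "openers 0 x \<le> openers 1 x"
      by (simp add: mem_beta_inv)
    with assms(1) \<open>r = 0\<close> show False
      using openers_D_less_U_after_top_step[of x] length_path by (simp add: mem_beta_inv)
  qed
qed

lemma beta_inv_cell_nonempty: "(r, c) \<in> cells [b, b] \<Longrightarrow> T (r, c) \<noteq> {}"
  using opener_in_beta_inv_cell[of r c] by (auto simp: cells_two_rows)

lemma beta_inv_syt: "T \<in> SYT_plus k [b, b]"
  unfolding SYT_plus_def
proof (intro CollectI conjI ballI allI impI)
  fix u assume "u \<in> cells [b, b]"
  then show "T u \<noteq> {}"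
    using beta_inv_cell_nonempty by (cases u) simp
next
  fix u assume "u \<notin> cells [b, b]"
  then show "T u = {}"
    using row_of_less_2 by (cases u) (auto simp: cells_two_rows mem_beta_inv)
next
  fix u v :: "nat \<times> nat" assume "u \<noteq> v"
  then show "T u \<inter> T v = {}"
    by (cases u, cases v) (auto simp: mem_beta_inv)
next
  show "(\<Union>u\<in>cells [b, b]. T u) = {1..sum_list [b, b] + k}"
  proof (intro equalityI subsetI)
    fix j assume "j \<in> (\<Union>u\<in>cells [b, b]. T u)"
    then obtain u where "j \<in> T u" by blast
    then show "j \<in> {1..sum_list [b, b] + k}"
      using length_path by (cases u) (simp add: mem_beta_inv mult_2)
  next
    fix j assume "j \<in> {1..sum_list [b, b] + k}"
    then have "j \<in> {1..n}"
      by (simp add: mult_2)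
    then have "j \<in> T (row_of (q ! (j - 1)), openers (row_of (q ! (j - 1))) j - 1)"
      (is "j \<in> T ?cell") by (rule in_beta_inv_cell)
    moreover from this have "?cell \<in> cells [b, b]"
      using row_of_less_2 by (simp add: cells_two_rows mem_beta_inv)
    ultimately show "j \<in> (\<Union>u\<in>cells [b, b]. T u)"
      by blast
  qed
next
  fix u v assume u: "u \<in> cells [b, b]" and v: "v \<in> cells [b, b]" and "u \<noteq> v \<and> weakly_nw u v"
  then have "\<forall>x\<in>T u. \<forall>y\<in>T v. x < y"
    using beta_inv_cell_less[of _ "fst u" "snd u" _ "fst v" "snd v"]
    by (simp add: weakly_nw_def prod_eq_iff)
  then show "Max (T u) < Min (T v)"
    using finite_beta_inv_cell u v beta_inv_cell_nonempty
    by (cases u, cases v) (simp add: Max_less_iff Min_gr_iff)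
qed

lemma beta_beta_inv: "beta b k T = q"
proof (rule nth_equalityI)
  interpret T: two_row_syt b k T
    by (rule two_row_syt.intro) (rule beta_inv_syt)
  show "length (beta b k T) = length q"
    using length_path by simp
  fix i assume "i < length (beta b k T)"
  then have j: "Suc i \<in> {1..n}" by simp
  define r where "r = row_of (q ! i)"
  define c where "c = openers r (Suc i) - 1"
  have cell: "Suc i \<in> T (r, c)"
    using in_beta_inv_cell[OF j] unfolding r_def c_def by simp
  then have "r < 2" "c < b"
    by (simp_all add: mem_beta_inv row_of_less_2 r_def)
  then have "row_of (beta_step b T (Suc i)) = row_of (q ! i)"
      and "beta_step b T (Suc i) = opener r \<longleftrightarrow> q ! i = opener r"
    using T.beta_step_cell[of r c "Suc i"] Min_beta_inv_cell_iff[of r c "Suc i"] cell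
    unfolding r_def by simp_all
  then have "beta_step b T (Suc i) = q ! i"
    unfolding r_def by (intro step_eqI) simp_all
  with j show "beta b k T ! i = q ! i"
    using nth_beta[of i b k T] by simp
qed

end

theorem theorem11:
  fixes b k :: nat
  assumes "b \<ge> 1"
  shows "bij_betw (beta b k) (SYT_plus k [b, b])
           {p \<in> Motz12 (2 * b + k). num_horiz p = k}"
proof (rule bij_betw_byWitness[where f' = "beta_inv b"])
  show "\<forall>S\<in>SYT_plus k [b, b]. beta_inv b (beta b k S) = S"
    using two_row_syt.beta_inv_beta two_row_syt.intro by blast
  show "\<forall>q\<in>{p \<in> Motz12 (2 * b + k). num_horiz p = k}. beta b k (beta_inv b q) = q"
    using motz12_path.beta_beta_inv motz12_path.intro by blast
  show "beta b k ` SYT_plus k [b, b] \<subseteq> {p \<in> Motz12 (2 * b + k). num_horiz p = k}"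
    using two_row_syt.beta_in_Motz12 two_row_syt.num_horiz_beta two_row_syt.intro by blast
  show "beta_inv b ` {p \<in> Motz12 (2 * b + k). num_horiz p = k} \<subseteq> SYT_plus k [b, b]"
    using motz12_path.beta_inv_syt motz12_path.intro by blast
qed

end
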